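(* Let $N, M$ be positive integers, $a_1,a_2,a_3$ real numbers, and $c_{ij}$ ($1\le i\le N$, $1\le j\le M$) and $p_j$ ($1\le j\le M$) arbitrary real parameters. For integers $l,m,n,s$ define $$\eta_j(l,m,n,s)=p_js+\max(0,p_j-a_1)l+\max(0,p_j-a_2)m+\max(0,p_j-a_3)n,\qquad \varphi_i(l,m,n,s)=\max_{1\le j\le M}\big(c_{ij}+\eta_j(l,m,n,s)\big).$$ Write $\varphi_i(s)=\varphi_i(l,m,n,s)$ and $\boldsymbol\varphi(s)=(\varphi_1(s),\dots,\varphi_N(s))^T$. Then for every $M$, the following hold for all integers $l,m,n,s$ and all $1\le i,i_1,i_2\le N$: (1) $\varphi_i(l+1,m,n,s)=\max(\varphi_i(l,m,n,s),\varphi_i(l,m,n,s+1)-a_1)$, $\varphi_i(l,m+1,n,s)=\max(\varphi_i(l,m,n,s),\varphi_i(l,m,n,s+1)-a_2)$, $\varphi_i(l,m,n+1,s)=\max(\varphi_i(l,m,n,s),\varphi_i(l,m,n,s+1)-a_3)$; (2) $\varphi_{i_1}(s)+\varphi_{i_2}(s)\le\max\big(\varphi_{i_1}(s-1)+\varphi_{i_2}(s+1),\ \varphi_{i_2}(s-1)+\varphi_{i_1}(s+1)\big)$. Moreover, if $M\in\{1,2,3\}$, then for all integers $l,m,n$ and all $0\le k_1<k_2<k_3\le N$: (3) $$\begin{aligned}&\mathrm{UP}[\boldsymbol\varphi(0)\cdots\widehat{\boldsymbol\varphi(k_2)}\cdots\boldsymbol\varphi(N)]+\mathrm{UP}[\boldsymbol\varphi(0)\cdots\widehat{\boldsymbol\varphi(k_1)}\cdots\widehat{\boldsymbol\varphi(k_3)}\cdots\boldsymbol\varphi(N+1)]\\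 =\max\Big(&\mathrm{UP}[\boldsymbol\varphi(0)\cdots\widehat{\boldsymbol\varphi(k_3)}\cdots\boldsymbol\varphi(N)]+\mathrm{UP}[\boldsymbol\varphi(0)\cdots\widehat{\boldsymbol\varphi(k_1)}\cdots\widehat{\boldsymbol\varphi(k_2)}\cdots\boldsymbol\varphi(N+1)],\\ &\mathrm{UP}[\boldsymbol\varphi(0)\cdots\widehat{\boldsymbol\varphi(k_1)}\cdots\boldsymbol\varphi(N)]+\mathrm{UP}[\boldsymbol\varphi(0)\cdots\widehat{\boldsymbol\varphi(k_2)}\cdots\widehat{\boldsymbol\varphi(k_3)}\cdots\boldsymbol\varphi(N+1)]\Big).\end{aligned}$$
   Context: For a real $N\times N$ matrix $A=[a_{ij}]$, the ultradiscrete permanent is $\mathrm{UP}[A]=\max_{\pi}(a_{1\pi_1}+\cdots+a_{N\pi_N})$, maximum over all permutations $\pi$ of $\{1,\dots,N\}$. $\mathrm{UP}[\boldsymbol v_1\ \cdots\ \boldsymbol v_N]$ denotes the UP of the matrix with columns $\boldsymbol v_1,\dots,\boldsymbol v_N$ in that order; a hat $\widehat{\boldsymbol\varphi(k)}$ means that column is omitted from the list $\boldsymbol\varphi(0),\boldsymbol\varphi(1),\dots$ (so each matrix in (3) has exactly $N$ columns), all evaluated at the same $(l,m,n)$. *)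

theory Defs
  imports Complex_Main "HOL-Combinatorics.Permutations"
begin

definition eta :: "(nat \<Rightarrow> real) \<Rightarrow> real \<Rightarrow> real \<Rightarrow> real \<Rightarrow> nat \<Rightarrow> int \<Rightarrow> int \<Rightarrow> int \<Rightarrow> int \<Rightarrow> real" where
  "eta p a1 a2 a3 j l m n s =
     p j * of_int s + max 0 (p j - a1) * of_int l + max 0 (p j - a2) * of_int m
     + max 0 (p j - a3) * of_int n"

definition phi :: "nat \<Rightarrow> (nat \<Rightarrow> nat \<Rightarrow> real) \<Rightarrow> (nat \<Rightarrow> real) \<Rightarrow> real \<Rightarrow> real \<Rightarrow> real
                   \<Rightarrow> nat \<Rightarrow> int \<Rightarrow> int \<Rightarrow> int \<Rightarrow> int \<Rightarrow> real" where
  "phi M c p a1 a2 a3 i l m n s = (MAX j \<in> {1..M}. c i j + eta p a1 a2 a3 j l m n s)"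

definition UP :: "nat \<Rightarrow> (nat \<Rightarrow> nat \<Rightarrow> real) \<Rightarrow> real" where
  "UP N A = (MAX \<pi> \<in> {\<pi>. \<pi> permutes {1..N}}. \<Sum>i=1..N. A i (\<pi> i))"

text \<open>UP of the matrix whose j-th column (1 <= j <= N) is the vector v (ks ! (j-1)),
  where v k i is the i-th entry of the k-th vector.\<close>
definition UP_cols :: "nat \<Rightarrow> (nat \<Rightarrow> nat \<Rightarrow> real) \<Rightarrow> nat list \<Rightarrow> real" where
  "UP_cols N v ks = UP N (\<lambda>i j. v (ks ! (j - 1)) i)"

end

theory Submission
  imports Defs
begin

text \<open>Sorting the (at most three) branches of \<open>\<phi>\<^sub>i\<close> by their slopes \<open>p\<^sub>j\<close>, every column is
  \<open>\<phi>(k) = (max\<^sub>t (W i t + q t * k))\<^sub>i\<close> with \<open>q 1 \<le> q 2 \<le> q 3\<close>. Choosing a branch for every row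
  (a labelling by 1, 2, 3), the best permutation is given by the rearrangement inequality, so the
  ultradiscrete permanent of a selection of columns is a maximum over labellings \<open>g\<close> of a weight of
  \<open>g\<close> plus a term depending only on the numbers of rows labelled 1 and \<open>\<le> 2\<close>. For the column
  selections of (3) this term is an explicit quadratic in these counts. Each product of two
  permanents in (3) is a maximum over pairs of labellings, and pairs are compared by exchanging the
  labels of some rows: balancing the counts of the pair never makes things worse, except in a
  single configuration where moving one row to label 2 does the job.\<close>

section \<open>Rearrangement of labelled rows\<close>

definition top_sum :: "nat \<Rightarrow> (nat \<Rightarrow> real) \<Rightarrow> nat \<Rightarrow> real" where
  "top_sum N \<kappa> u = (\<Sum>j\<in>{u+1..N}. \<kappa> j)"

lemma sum_le_top_sum:
  fixes \<kappa> :: "nat \<Rightarrow> real"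
  assumes mono: "mono_on {1..N} \<kappa>" and T: "T \<subseteq> {1..N}" and card_T: "card T + u = N"
  shows "sum \<kappa> T \<le> top_sum N \<kappa> u"
proof -
  define A where "A = {u+1..N}"
  have fin: "finite T" "finite A" using T finite_subset unfolding A_def by auto
  have card_eq: "card (T - A) = card (A - T)"
    using card_Int_Diff[OF fin(1), of A] card_Int_Diff[OF fin(2), of T] card_T
    by (simp add: A_def Int_commute)
  have "sum \<kappa> (T - A) \<le> sum \<kappa> (A - T)"
  proof (cases "T - A = {}")
    case True
    then have "A - T = {}" using card_eq fin by (metis card_0_eq card.empty finite_Diff)
    then show ?thesis using True by simp
  next
    case False
    then have u: "1 \<le> u" "u \<le> N" using T card_T unfolding A_def by auto
    \<comment> \<open>every element of \<open>T - A\<close> is at most \<open>u\<close>, every element of \<open>A - T\<close> exceeds \<open>u\<close>\<close>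
    have "sum \<kappa> (T - A) \<le> of_nat (card (T - A)) * \<kappa> u"
      using T u by (intro sum_bounded_above mono_onD[OF mono]) (auto simp: A_def)
    also have "\<dots> \<le> sum \<kappa> (A - T)"
      unfolding card_eq using T u by (intro sum_bounded_below mono_onD[OF mono]) (auto simp: A_def)
    finally show ?thesis .
  qed
  then show ?thesis
    using sum.Int_Diff[OF fin(1), of \<kappa> A] sum.Int_Diff[OF fin(2), of \<kappa> T]
    by (simp add: top_sum_def A_def Int_commute)
qed

lemma sum_permuted_le_top_sum:
  fixes \<kappa> :: "nat \<Rightarrow> real"
  assumes mono: "mono_on {1..N} \<kappa>" and \<pi>: "\<pi> permutes {1..N}"
    and S: "S \<subseteq> {1..N}" and card_S: "card S + u = N"
  shows "(\<Sum>i\<in>S. \<kappa> (\<pi> i)) \<le> top_sum N \<kappa> u"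
proof -
  have inj: "inj_on \<pi> S" using permutes_inj_on[OF \<pi>] .
  have "(\<Sum>i\<in>S. \<kappa> (\<pi> i)) = sum \<kappa> (\<pi> ` S)" using sum.reindex[OF inj, of \<kappa>] by simp
  also have "\<dots> \<le> top_sum N \<kappa> u"
    using S permutes_image[OF \<pi>] card_image[OF inj] card_S by (intro sum_le_top_sum[OF mono]) auto
  finally show ?thesis .
qed

definition labelling :: "nat \<Rightarrow> (nat \<Rightarrow> nat) \<Rightarrow> bool" where
  "labelling N g \<longleftrightarrow> (\<forall>i\<in>{1..N}. g i \<in> {1, 2, 3})"

definition n1 :: "nat \<Rightarrow> (nat \<Rightarrow> nat) \<Rightarrow> nat" where
  "n1 N g = card {i\<in>{1..N}. g i = 1}"

definition n12 :: "nat \<Rightarrow> (nat \<Rightarrow> nat) \<Rightarrow> nat" where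
  "n12 N g = card {i\<in>{1..N}. g i \<le> 2}"

definition label_weight :: "(nat \<Rightarrow> nat \<Rightarrow> real) \<Rightarrow> nat \<Rightarrow> (nat \<Rightarrow> nat) \<Rightarrow> real" where
  "label_weight W N g = (\<Sum>i=1..N. W i (g i))"

text \<open>For increasing \<open>\<kappa>\<close> and \<open>q 1 \<le> q 2 \<le> q 3\<close>, the largest value of
  \<open>\<Sum>i. q (g i) * \<kappa> (\<pi> i)\<close> over permutations \<open>\<pi>\<close>: the rows labelled 1, 2, 3 are matched
  with the smallest, middle and largest values of \<open>\<kappa>\<close>.\<close>
definition rearr_value :: "nat \<Rightarrow> (nat \<Rightarrow> real) \<Rightarrow> (nat \<Rightarrow> real) \<Rightarrow> (nat \<Rightarrow> nat) \<Rightarrow> real" where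
  "rearr_value N q \<kappa> g = q 1 * top_sum N \<kappa> 0 + (q 2 - q 1) * top_sum N \<kappa> (n1 N g)
     + (q 3 - q 2) * top_sum N \<kappa> (n12 N g)"

lemma card_filter_add_card_filter_not:
  "finite A \<Longrightarrow> card {x\<in>A. P x} + card {x\<in>A. \<not> P x} = card A"
proof -
  assume "finite A"
  then have "card A = card (A \<inter> {x. P x}) + card (A - {x. P x})" by (rule card_Int_Diff)
  moreover have "A \<inter> {x. P x} = {x\<in>A. P x}" "A - {x. P x} = {x\<in>A. \<not> P x}" by auto
  ultimately show ?thesis by simp
qed

lemma n1_le_n12: "labelling N g \<Longrightarrow> n1 N g \<le> n12 N g"
  unfolding n1_def n12_def by (rule card_mono) auto

lemma n12_le: "n12 N g \<le> N"
  unfolding n12_def by (rule order.trans[OF card_mono[of "{1..N}"]]) auto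

lemma n1_le: "labelling N g \<Longrightarrow> n1 N g \<le> N"
  using n1_le_n12 n12_le le_trans by blast

lemma perm_sum_le_rearr_value:
  fixes \<kappa> :: "nat \<Rightarrow> real"
  assumes mono: "mono_on {1..N} \<kappa>" and \<pi>: "\<pi> permutes {1..N}" and g: "labelling N g"
    and q: "q 1 \<le> q 2" "q 2 \<le> q 3"
  shows "(\<Sum>i=1..N. q (g i) * \<kappa> (\<pi> i)) \<le> rearr_value N q \<kappa> g"
proof -
  let ?R = "{1..N}" and ?S1 = "{i\<in>{1..N}. \<not> g i = 1}" and ?S2 = "{i\<in>{1..N}. \<not> g i \<le> 2}"
  have "(\<Sum>i\<in>?R. q (g i) * \<kappa> (\<pi> i)) = (\<Sum>i\<in>?R. q 1 * \<kappa> (\<pi> i)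
      + (q 2 - q 1) * (\<kappa> (\<pi> i) * of_bool (\<not> g i = 1))
      + (q 3 - q 2) * (\<kappa> (\<pi> i) * of_bool (\<not> g i \<le> 2)))"
    using g unfolding labelling_def by (intro sum.cong) (auto simp: algebra_simps)
  also have "\<dots> = q 1 * (\<Sum>i\<in>?R. \<kappa> (\<pi> i)) + (q 2 - q 1) * (\<Sum>i\<in>?S1. \<kappa> (\<pi> i))
      + (q 3 - q 2) * (\<Sum>i\<in>?S2. \<kappa> (\<pi> i))"
    by (simp add: sum.distrib sum_distrib_left[symmetric] Int_def)
  also have "(\<Sum>i\<in>?R. \<kappa> (\<pi> i)) = top_sum N \<kappa> 0"
    unfolding top_sum_def using sum.permute[OF \<pi>, of \<kappa>] by (simp add: comp_def)
  also have "(q 2 - q 1) * (\<Sum>i\<in>?S1. \<kappa> (\<pi> i)) \<le> (q 2 - q 1) * top_sum N \<kappa> (n1 N g)"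
    using card_filter_add_card_filter_not[of ?R "\<lambda>i. g i = 1"] q
    by (intro mult_left_mono sum_permuted_le_top_sum[OF mono \<pi>]) (auto simp: n1_def)
  also have "(q 3 - q 2) * (\<Sum>i\<in>?S2. \<kappa> (\<pi> i)) \<le> (q 3 - q 2) * top_sum N \<kappa> (n12 N g)"
    using card_filter_add_card_filter_not[of ?R "\<lambda>i. g i \<le> 2"] q
    by (intro mult_left_mono sum_permuted_le_top_sum[OF mono \<pi>]) (auto simp: n12_def)
  finally show ?thesis unfolding rearr_value_def by simp
qed

lemma exists_permutes_fibres:
  assumes "finite A" and fibres: "\<And>t. card {i\<in>A. f i = t} = card {i\<in>A. g i = t}"
  shows "\<exists>\<pi>. \<pi> permutes A \<and> (\<forall>i\<in>A. g (\<pi> i) = f i)"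
proof -
  have "\<forall>t. \<exists>b. bij_betw b {i\<in>A. f i = t} {i\<in>A. g i = t}"
    using \<open>finite A\<close> fibres by (auto intro: finite_same_card_bij)
  then obtain b where b: "\<And>t. bij_betw (b t) {i\<in>A. f i = t} {i\<in>A. g i = t}"
    by metis
  define \<pi> where "\<pi> i = (if i \<in> A then b (f i) i else i)" for i
  have \<pi>_fibre: "\<pi> i \<in> A \<and> g (\<pi> i) = f i" if "i \<in> A" for i
    using bij_betwE[OF b[of "f i"]] that by (auto simp: \<pi>_def)
  have "inj_on \<pi> A"
  proof (rule inj_onI)
    fix i j assume ij: "i \<in> A" "j \<in> A" "\<pi> i = \<pi> j"
    then have "f i = f j" using \<pi>_fibre by metis
    then show "i = j"
      using ij bij_betw_imp_inj_on[OF b[of "f i"]] by (auto simp: \<pi>_def inj_on_def)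
  qed
  moreover have "A \<subseteq> \<pi> ` A"
  proof
    fix j assume j: "j \<in> A"
    then obtain i where "i \<in> {i\<in>A. f i = g j}" "b (g j) i = j"
      using bij_betw_imp_surj_on[OF b[of "g j"]] by (metis (mono_tags, lifting) imageE mem_Collect_eq)
    then show "j \<in> \<pi> ` A" by (force simp: \<pi>_def)
  qed
  ultimately have "bij_betw \<pi> A A" using \<pi>_fibre by (auto simp: bij_betw_def)
  then have "\<pi> permutes A" by (rule bij_imp_permutes) (simp add: \<pi>_def)
  then show ?thesis using \<pi>_fibre by blast
qed

definition step_label :: "nat \<Rightarrow> nat \<Rightarrow> nat \<Rightarrow> nat" where
  "step_label u w j = (if j \<le> u then 1 else if j \<le> w then 2 else 3)"

lemma sum_step_label:
  fixes \<kappa> q :: "nat \<Rightarrow> real"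
  assumes "u \<le> w"
  shows "(\<Sum>j=1..N. q (step_label u w j) * \<kappa> j)
    = q 1 * top_sum N \<kappa> 0 + (q 2 - q 1) * top_sum N \<kappa> u + (q 3 - q 2) * top_sum N \<kappa> w"
proof -
  have "(\<Sum>j=1..N. q (step_label u w j) * \<kappa> j) = (\<Sum>j=1..N. q 1 * \<kappa> j
      + (q 2 - q 1) * (\<kappa> j * of_bool (u < j)) + (q 3 - q 2) * (\<kappa> j * of_bool (w < j)))"
    using assms by (intro sum.cong) (auto simp: step_label_def algebra_simps)
  also have "\<dots> = q 1 * top_sum N \<kappa> 0 + (q 2 - q 1) * top_sum N \<kappa> u + (q 3 - q 2) * top_sum N \<kappa> w"
  proof -
    have "{1..N} \<inter> {j. v < j} = {v+1..N}" for v :: nat by auto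
    then show ?thesis by (simp add: top_sum_def sum.distrib sum_distrib_left[symmetric])
  qed
  finally show ?thesis .
qed

lemma card_fibres_step_label:
  assumes g: "labelling N g"
  shows "card {i\<in>{1..N}. g i = t} = card {j\<in>{1..N}. step_label (n1 N g) (n12 N g) j = t}"
proof -
  let ?u = "n1 N g" and ?w = "n12 N g"
  have uw: "?u \<le> ?w" "?w \<le> N" using n1_le_n12[OF g] n12_le by auto
  have le2: "{i\<in>{1..N}. g i \<le> 2} = {i\<in>{1..N}. g i = 1} \<union> {i\<in>{1..N}. g i = 2}"
    using g unfolding labelling_def by auto
  have "?w = ?u + card {i\<in>{1..N}. g i = 2}"
    unfolding n1_def n12_def le2 by (rule card_Un_disjoint) auto
  then have card2: "card {i\<in>{1..N}. g i = 2} = ?w - ?u" by simp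
  have card3: "card {i\<in>{1..N}. g i = 3} = N - ?w"
  proof -
    have "{i\<in>{1..N}. g i = 3} = {i\<in>{1..N}. \<not> g i \<le> 2}" using g unfolding labelling_def by force
    then show ?thesis
      using card_filter_add_card_filter_not[of "{1..N}" "\<lambda>i. g i \<le> 2"] by (simp add: n12_def)
  qed
  have "{j\<in>{1..N}. step_label ?u ?w j = t}
      = (if t = 1 then {1..?u} else if t = 2 then {?u+1..?w} else if t = 3 then {?w+1..N} else {})"
    using uw by (auto simp: step_label_def split: if_splits)
  moreover have "{i\<in>{1..N}. g i = t} = {}" if "t \<notin> {1, 2, 3}"
    using g that unfolding labelling_def by auto
  ultimately show ?thesis using card2 card3 by (auto simp: n1_def)
qed

lemma rearr_value_attained:
  fixes \<kappa> q :: "nat \<Rightarrow> real"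
  assumes g: "labelling N g"
  shows "\<exists>\<pi>. \<pi> permutes {1..N} \<and> (\<Sum>i=1..N. q (g i) * \<kappa> (\<pi> i)) = rearr_value N q \<kappa> g"
proof -
  let ?step = "step_label (n1 N g) (n12 N g)"
  obtain \<pi> where \<pi>: "\<pi> permutes {1..N}" and fibre: "\<forall>i\<in>{1..N}. ?step (\<pi> i) = g i"
    using exists_permutes_fibres[of "{1..N}" g ?step] card_fibres_step_label[OF g] by auto
  have "(\<Sum>i=1..N. q (g i) * \<kappa> (\<pi> i)) = (\<Sum>i=1..N. q (?step (\<pi> i)) * \<kappa> (\<pi> i))"
    using fibre by simp
  also have "\<dots> = (\<Sum>j=1..N. q (?step j) * \<kappa> j)"
    using sum.permute[OF \<pi>, of "\<lambda>j. q (?step j) * \<kappa> j"] by (simp add: comp_def)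
  also have "\<dots> = rearr_value N q \<kappa> g"
    unfolding rearr_value_def using n1_le_n12[OF g] by (rule sum_step_label)
  finally show ?thesis using \<pi> by blast
qed

section \<open>Permanents of max-plus columns\<close>

definition trop_col :: "(nat \<Rightarrow> nat \<Rightarrow> real) \<Rightarrow> (nat \<Rightarrow> real) \<Rightarrow> nat \<Rightarrow> nat \<Rightarrow> real" where
  "trop_col W q k i = Max ((\<lambda>t. W i t + q t * real k) ` {1, 2, 3})"

lemma trop_col_ge: "t \<in> {1, 2, 3} \<Longrightarrow> W i t + q t * real k \<le> trop_col W q k i"
  unfolding trop_col_def by (rule Max_ge) auto

lemma trop_col_attained: "\<exists>t\<in>{1, 2, 3}. trop_col W q k i = W i t + q t * real k"
proof -
  have "trop_col W q k i \<in> (\<lambda>t. W i t + q t * real k) ` {1, 2, 3}"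
    unfolding trop_col_def by (rule Max_in) auto
  then show ?thesis by blast
qed

text \<open>Columns of \<open>UP_cols\<close> are numbered from 1, positions in the list of column indices from 0.\<close>
definition col_key :: "nat list \<Rightarrow> nat \<Rightarrow> real" where
  "col_key ks j = real (ks ! (j - 1))"

lemma UP_cols_attained:
  "\<exists>\<pi>. \<pi> permutes {1..N} \<and> UP_cols N v ks = (\<Sum>i=1..N. v (ks ! (\<pi> i - 1)) i)"
proof -
  let ?F = "\<lambda>\<pi>. \<Sum>i=1..N. v (ks ! (\<pi> i - 1)) i"
  have "finite {\<pi>. \<pi> permutes {1..N}}" by (rule finite_permutations) simp
  moreover have "{\<pi>. \<pi> permutes {1..N}} \<noteq> {}" using permutes_id by blast
  ultimately have "Max (?F ` {\<pi>. \<pi> permutes {1..N}}) \<in> ?F ` {\<pi>. \<pi> permutes {1..N}}"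
    by (intro Max_in) auto
  then show ?thesis unfolding UP_cols_def UP_def by auto
qed

lemma UP_cols_ge: "\<pi> permutes {1..N} \<Longrightarrow> (\<Sum>i=1..N. v (ks ! (\<pi> i - 1)) i) \<le> UP_cols N v ks"
  unfolding UP_cols_def UP_def using finite_permutations by (intro Max_ge) auto

lemma UP_cols_trop_col_le:
  assumes mono: "mono_on {1..N} (col_key ks)" and q: "q 1 \<le> q 2" "q 2 \<le> q 3"
  shows "\<exists>g. labelling N g
    \<and> UP_cols N (trop_col W q) ks \<le> label_weight W N g + rearr_value N q (col_key ks) g"
proof -
  obtain \<pi> where \<pi>: "\<pi> permutes {1..N}"
    and UP_eq: "UP_cols N (trop_col W q) ks = (\<Sum>i=1..N. trop_col W q (ks ! (\<pi> i - 1)) i)"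
    using UP_cols_attained by blast
  have "\<forall>i. \<exists>t. t \<in> {1, 2, 3}
      \<and> trop_col W q (ks ! (\<pi> i - 1)) i = W i t + q t * col_key ks (\<pi> i)"
    using trop_col_attained unfolding col_key_def by blast
  then obtain g where g: "\<forall>i. g i \<in> {1, 2, 3}
      \<and> trop_col W q (ks ! (\<pi> i - 1)) i = W i (g i) + q (g i) * col_key ks (\<pi> i)"
    by metis
  then have lab: "labelling N g" unfolding labelling_def by blast
  have "UP_cols N (trop_col W q) ks = (\<Sum>i=1..N. W i (g i) + q (g i) * col_key ks (\<pi> i))"
    unfolding UP_eq using g by simp
  also have "\<dots> \<le> label_weight W N g + rearr_value N q (col_key ks) g"
    using perm_sum_le_rearr_value[OF mono \<pi> lab q] by (simp add: sum.distrib label_weight_def)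
  finally show ?thesis using lab by blast
qed

lemma UP_cols_trop_col_ge:
  assumes g: "labelling N g"
  shows "label_weight W N g + rearr_value N q (col_key ks) g \<le> UP_cols N (trop_col W q) ks"
proof -
  obtain \<pi> where \<pi>: "\<pi> permutes {1..N}"
    and "(\<Sum>i=1..N. q (g i) * col_key ks (\<pi> i)) = rearr_value N q (col_key ks) g"
    using rearr_value_attained[OF g] by blast
  then have "label_weight W N g + rearr_value N q (col_key ks) g
      = (\<Sum>i=1..N. W i (g i) + q (g i) * col_key ks (\<pi> i))"
    by (simp add: label_weight_def sum.distrib)
  also have "\<dots> \<le> (\<Sum>i=1..N. trop_col W q (ks ! (\<pi> i - 1)) i)"
    using g unfolding labelling_def col_key_def by (intro sum_mono trop_col_ge) auto
  also have "\<dots> \<le> UP_cols N (trop_col W q) ks" by (rule UP_cols_ge[OF \<pi>])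
  finally show ?thesis .
qed

section \<open>Columns with omitted indices\<close>

definition del1 :: "nat \<Rightarrow> nat \<Rightarrow> nat list" where
  "del1 N x = [k\<leftarrow>[0..<N + 1]. k \<noteq> x]"

definition del2 :: "nat \<Rightarrow> nat \<Rightarrow> nat \<Rightarrow> nat list" where
  "del2 N y z = [k\<leftarrow>[0..<N + 2]. k \<noteq> y \<and> k \<noteq> z]"

lemma filter_upt_all: "(\<And>k. a \<le> k \<Longrightarrow> k < b \<Longrightarrow> P k) \<Longrightarrow> filter P [a..<b] = [a..<b]"
  by (rule filter_True) simp

lemma del1_eq: "x \<le> N \<Longrightarrow> del1 N x = [0..<x] @ [Suc x..<N + 1]"
proof -
  assume x: "x \<le> N"
  have "[0..<N + 1] = [0..<x] @ [x..<N + 1]" using x upt_add_eq_append[of 0 x "N + 1 - x"] by simp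
  also have "[x..<N + 1] = x # [Suc x..<N + 1]" using x by (simp add: upt_conv_Cons del: upt_Suc)
  finally have "[0..<N + 1] = [0..<x] @ x # [Suc x..<N + 1]" .
  then show ?thesis unfolding del1_def by (simp del: upt_Suc add: filter_upt_all)
qed

lemma del2_eq:
  "y < z \<Longrightarrow> z \<le> N + 1 \<Longrightarrow> del2 N y z = [0..<y] @ [Suc y..<z] @ [Suc z..<N + 2]"
proof -
  assume yz: "y < z" "z \<le> N + 1"
  have "[0..<N + 2] = [0..<y] @ [y..<N + 2]" using yz upt_add_eq_append[of 0 y "N + 2 - y"] by simp
  also have "[y..<N + 2] = y # [Suc y..<z] @ z # [Suc z..<N + 2]"
    using yz upt_add_eq_append[of "Suc y" z "N + 2 - z"] by (simp add: upt_conv_Cons del: upt_Suc)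
  finally show ?thesis using yz unfolding del2_def by (simp del: upt_Suc add: filter_upt_all)
qed

lemma nth_del1:
  "x \<le> N \<Longrightarrow> 1 \<le> j \<Longrightarrow> j \<le> N \<Longrightarrow> del1 N x ! (j - 1) = j - 1 + (if x < j then 1 else 0)"
  by (simp only: del1_eq) (auto simp: nth_append)

lemma nth_del2:
  "y < z \<Longrightarrow> z \<le> N + 1 \<Longrightarrow> 1 \<le> j \<Longrightarrow> j \<le> N \<Longrightarrow>
   del2 N y z ! (j - 1) = j - 1 + (if y < j then 1 else 0) + (if z \<le> j then 1 else 0)"
  by (simp only: del2_eq) (auto simp: nth_append; arith)

lemma col_key_del1:
  "x \<le> N \<Longrightarrow> j \<in> {1..N} \<Longrightarrow> col_key (del1 N x) j = real (j - 1) + of_bool (x < j)"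
  using nth_del1[of x N j] by (simp add: col_key_def)

lemma col_key_del2:
  "y < z \<Longrightarrow> z \<le> N + 1 \<Longrightarrow> j \<in> {1..N} \<Longrightarrow>
   col_key (del2 N y z) j = real (j - 1) + of_bool (y < j) + of_bool (z \<le> j)"
  using nth_del2[of y z N j] by (simp add: col_key_def)

lemma mono_col_key_del1:
  assumes "x \<le> N" shows "mono_on {1..N} (col_key (del1 N x))"
proof (rule mono_onI)
  fix r s assume "r \<in> {1..N}" "s \<in> {1..N}" "r \<le> s"
  then show "col_key (del1 N x) r \<le> col_key (del1 N x) s"
    using nth_del1[OF assms, of r] nth_del1[OF assms, of s] by (simp add: col_key_def)
qed

lemma mono_col_key_del2:
  assumes "y < z" "z \<le> N + 1" shows "mono_on {1..N} (col_key (del2 N y z))"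
proof (rule mono_onI)
  fix r s assume "r \<in> {1..N}" "s \<in> {1..N}" "r \<le> s"
  then show "col_key (del2 N y z) r \<le> col_key (del2 N y z) s"
    using nth_del2[OF assms, of r] nth_del2[OF assms, of s] by (simp add: col_key_def)
qed

lemma top_sum_pred:
  "u \<le> N \<Longrightarrow> 2 * top_sum N (\<lambda>j. real (j - 1)) u = real N * (real N - 1) - real u * (real u - 1)"
proof (induction N)
  case (Suc N)
  show ?case
  proof (cases "u = Suc N")
    case False
    then have "u \<le> N" using Suc.prems by simp
    moreover have "{u+1..Suc N} = insert (Suc N) {u+1..N}" using \<open>u \<le> N\<close> by auto
    ultimately show ?thesis using Suc.IH by (simp add: top_sum_def algebra_simps)
  qed (simp add: top_sum_def)
qed (simp add: top_sum_def)

lemma card_interval_Int_greater: "card ({u+1..N} \<inter> {j. y < j}) = N - max u y"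
proof -
  have "{u+1..N} \<inter> {j. y < j} = {max u y + 1..N}" by auto
  then show ?thesis by simp
qed

lemma top_sum_del1:
  assumes "x \<le> N"
  shows "top_sum N (col_key (del1 N x)) u = top_sum N (\<lambda>j. real (j - 1)) u + real (N - max u x)"
proof -
  have "top_sum N (col_key (del1 N x)) u = top_sum N (\<lambda>j. real (j - 1) + of_bool (x < j)) u"
    unfolding top_sum_def using assms by (intro sum.cong) (auto simp: col_key_del1)
  then show ?thesis unfolding top_sum_def
    by (simp only: sum.distrib sum_of_bool_eq finite_atLeastAtMost card_interval_Int_greater)
qed

lemma top_sum_del2:
  assumes "y < z" "z \<le> N + 1"
  shows "top_sum N (col_key (del2 N y z)) u
    = top_sum N (\<lambda>j. real (j - 1)) u + real (N - max u y) + real (N - max u (z - 1))"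
proof -
  have "top_sum N (col_key (del2 N y z)) u
      = top_sum N (\<lambda>j. (real (j - 1) + of_bool (y < j)) + of_bool (z - 1 < j)) u"
    unfolding top_sum_def using assms by (intro sum.cong) (auto simp: col_key_del2)
  then show ?thesis unfolding top_sum_def
    by (simp only: sum.distrib sum_of_bool_eq finite_atLeastAtMost card_interval_Int_greater)
qed

definition pair_top :: "nat \<Rightarrow> nat \<Rightarrow> nat \<Rightarrow> nat \<Rightarrow> nat \<Rightarrow> nat \<Rightarrow> real" where
  "pair_top N x y z t t' = top_sum N (col_key (del1 N x)) t + top_sum N (col_key (del2 N y z)) t'"

text \<open>Twice \<open>pair_top N x y z t t'\<close> without its constant part \<open>2 N (N - 1) + 6 N\<close>, see
  \<open>pair_top_psi\<close>.\<close>
definition psi :: "int \<Rightarrow> int \<Rightarrow> int \<Rightarrow> int \<Rightarrow> int \<Rightarrow> int" where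
  "psi x y z t t' = - (t * (t - 1)) - t' * (t' - 1) - 2 * (max t x + max t' y + max t' (z - 1))"

lemma pair_top_psi:
  assumes "x \<le> N" "y < z" "z \<le> N + 1" "t \<le> N" "t' \<le> N"
  shows "2 * pair_top N x y z t t'
    = 2 * real N * (real N - 1) + 6 * real N + of_int (psi (int x) (int y) (int z) (int t) (int t'))"
proof -
  have maxs: "real (N - max t x) = real N - max (real t) (real x)"
    "real (N - max t' y) = real N - max (real t') (real y)"
    "real (N - max t' (z - 1)) = real N - max (real t') (real z - 1)"
    using assms by (auto simp: of_nat_diff max_def)
  have psi: "of_int (psi (int x) (int y) (int z) (int t) (int t')) = - (real t * (real t - 1))
      - real t' * (real t' - 1) - 2 * (max (real t) (real x) + max (real t') (real y)
      + max (real t') (real z - 1))"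
    unfolding psi_def by (simp add: of_int_max)
  have linear: "2 * (A + (n - max t x) + (B + (n - max t' y) + (n - max t' (z - 1))))
      = 2 * n * (n - 1) + 6 * n + P"
    if "P = - (t * (t - 1)) - t' * (t' - 1) - 2 * (max t x + max t' y + max t' (z - 1))"
      "2 * A = n * (n - 1) - t * (t - 1)" "2 * B = n * (n - 1) - t' * (t' - 1)"
    for A B n t t' x y z P :: real
    using that by (simp add: algebra_simps)
  show ?thesis
    unfolding pair_top_def top_sum_del1[OF assms(1)] top_sum_del2[OF assms(2,3)] maxs
    by (rule linear[OF psi top_sum_pred[OF assms(4)] top_sum_pred[OF assms(5)]])
qed

section \<open>Comparing the quadratic terms\<close>

lemma square_ge_tangent: "(2 * j + 1) * d - j * (j + 1) \<le> (d :: int) * d"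
proof -
  have "0 \<le> (d - j) * (d - j - 1)"
    by (cases "d \<le> j") (simp_all add: mult_nonpos_nonpos)
  then show ?thesis by (simp add: algebra_simps)
qed

lemma square_ge_tangents:
  fixes d :: int
  shows "d*d \<ge> d" "d*d \<ge> 3*d - 2" "d*d \<ge> 5*d - 6" "d*d \<ge> 7*d - 12" "d*d \<ge> 9*d - 20"
    "d*d \<ge> -d" "d*d \<ge> -3*d - 2" "d*d \<ge> -5*d - 6" "d*d \<ge> -7*d - 12"
  using square_ge_tangent[of 0 d] square_ge_tangent[of 1 d] square_ge_tangent[of 2 d]
    square_ge_tangent[of 3 d] square_ge_tangent[of 4 d] square_ge_tangent[of "-1" d]
    square_ge_tangent[of "-2" d] square_ge_tangent[of "-3" d] square_ge_tangent[of "-4" d]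
  by simp_all

lemma balanced_split [case_names even odd]:
  fixes t t' :: int
  obtains h d where "t = h + d" "t' = h - d" "(t + t' + 1) div 2 = h" "(t + t') div 2 = h"
      "t * (t - 1) + t' * (t' - 1) = 2 * (h * (h - 1)) + 2 * (d * d)"
    | h d where "t = h + 1 + d" "t' = h - d" "(t + t' + 1) div 2 = h + 1" "(t + t') div 2 = h"
      "t * (t - 1) + t' * (t' - 1) = (h + 1) * h + h * (h - 1) + 2 * (d * d) + 2 * d"
proof (cases "even (t + t')")
  case True
  then obtain h where h: "t + t' = 2 * h" by (metis evenE)
  define d where "d = t - h"
  have td: "t = h + d" "t' = h - d" using h by (simp_all add: d_def)
  show ?thesis
    by (rule that(1)[of h d]) (use h in \<open>simp_all add: td algebra_simps\<close>)
next
  case False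
  then obtain h where h: "t + t' = 2 * h + 1" by (metis oddE)
  define d where "d = t - h - 1"
  have td: "t = h + 1 + d" "t' = h - d" using h by (simp_all add: d_def)
  show ?thesis
    by (rule that(2)[of h d]) (use h in \<open>simp_all add: td algebra_simps\<close>)
qed

lemma psi_cab_le_bac_balanced:
  fixes a b c t t' :: int
  assumes "0 \<le> a" "a < b" "b < c" "0 \<le> t" "0 \<le> t'"
  shows "psi c a b t t' \<le> psi b a c ((t + t' + 1) div 2) ((t + t') div 2)"
proof (cases t t' rule: balanced_split)
  case (even h d)
  show ?thesis unfolding even(3,4) psi_def
    using even(5) square_ge_tangents[of d] assms by (smt (verit) even(1,2))
next
  case (odd h d)
  show ?thesis unfolding odd(3,4) psi_def
    using odd(5) square_ge_tangents[of d] assms by (smt (verit) odd(1,2))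
qed

lemma psi_abc_le_bac_balanced:
  fixes a b c t t' :: int
  assumes "0 \<le> a" "a < b" "b < c" "0 \<le> t" "0 \<le> t'"
  shows "psi a b c t t' \<le> psi b a c ((t + t' + 1) div 2) ((t + t') div 2)"
proof (cases t t' rule: balanced_split)
  case (even h d)
  show ?thesis unfolding even(3,4) psi_def
    using even(5) square_ge_tangents[of d] assms by (smt (verit) even(1,2))
next
  case (odd h d)
  show ?thesis unfolding odd(3,4) psi_def
    using odd(5) square_ge_tangents[of d] assms by (smt (verit) odd(1,2))
qed

lemma psi_bac_le_cab_balanced:
  fixes a b c t t' :: int
  assumes "0 \<le> a" "a < b" "b < c" "0 \<le> t" "0 \<le> t'" "\<not> (t = t' \<and> b \<le> t \<and> t \<le> c - 1)"
  shows "psi b a c t t' \<le> psi c a b ((t + t' + 1) div 2) ((t + t') div 2)"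
proof (cases t t' rule: balanced_split)
  case (even h d)
  show ?thesis unfolding even(3,4) psi_def
    using even(5) square_ge_tangents[of d] assms by (smt (verit) even(1,2))
next
  case (odd h d)
  show ?thesis unfolding odd(3,4) psi_def
    using odd(5) square_ge_tangents[of d] assms by (smt (verit) odd(1,2))
qed

lemma psi_bac_le_abc_balanced:
  fixes a b c t t' :: int
  assumes "0 \<le> a" "a < b" "b < c" "0 \<le> t" "0 \<le> t'" "\<not> (t = t' + 1 \<and> a + 1 \<le> t \<and> t \<le> b)"
  shows "psi b a c t t' \<le> psi a b c ((t + t' + 1) div 2) ((t + t') div 2)"
proof (cases t t' rule: balanced_split)
  case (even h d)
  show ?thesis unfolding even(3,4) psi_def
    using even(5) square_ge_tangents[of d] assms by (smt (verit) even(1,2))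
next
  case (odd h d)
  show ?thesis unfolding odd(3,4) psi_def
    using odd(5) square_ge_tangents[of d] assms by (smt (verit) odd(1,2))
qed

lemma psi_bac_le_abc_shift:
  fixes a b c t :: int
  assumes "a < b" "b < c" "a < t" "t \<le> b"
  shows "psi b a c t (t - 1) \<le> psi a b c (t - 1) t"
  using assms unfolding psi_def by (simp add: algebra_simps)

lemma psi_bac_le_cab_shift:
  fixes a b c t :: int
  assumes "a < b" "b < c" "b \<le> t" "t < c"
  shows "psi b a c t t \<le> psi c a b (t + 1) (t - 1)"
  using assms unfolding psi_def by (simp add: algebra_simps)

section \<open>Exchanging labels between two labellings\<close>

definition row_swap :: "nat \<Rightarrow> (nat \<Rightarrow> nat) \<Rightarrow> (nat \<Rightarrow> nat) \<Rightarrow> (nat \<Rightarrow> nat) \<Rightarrow> (nat \<Rightarrow> nat) \<Rightarrow> bool" where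
  "row_swap N g g' h h' \<longleftrightarrow> (\<forall>i\<in>{1..N}. (h i = g i \<and> h' i = g' i) \<or> (h i = g' i \<and> h' i = g i))"

lemma row_swap_sum:
  fixes F :: "nat \<Rightarrow> nat \<Rightarrow> 'a::comm_monoid_add"
  assumes "row_swap N g g' h h'"
  shows "(\<Sum>i=1..N. F i (h i)) + (\<Sum>i=1..N. F i (h' i)) = (\<Sum>i=1..N. F i (g i)) + (\<Sum>i=1..N. F i (g' i))"
proof -
  have "F i (h i) + F i (h' i) = F i (g i) + F i (g' i)" if "i \<in> {1..N}" for i
  proof -
    have "(h i = g i \<and> h' i = g' i) \<or> (h i = g' i \<and> h' i = g i)"
      using assms that unfolding row_swap_def by blast
    then show ?thesis by (auto simp: add.commute)
  qed
  then show ?thesis by (simp add: sum.distrib[symmetric])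
qed

lemma card_filter_eq_sum: "card {i\<in>{1..N::nat}. P i} = (\<Sum>i=1..N. of_bool (P i))"
  by (simp add: Int_def conj_commute)

lemma row_swap_label_weight:
  "row_swap N g g' h h' \<Longrightarrow> label_weight W N h + label_weight W N h' = label_weight W N g + label_weight W N g'"
  unfolding label_weight_def by (rule row_swap_sum)

lemma row_swap_n1: "row_swap N g g' h h' \<Longrightarrow> n1 N h + n1 N h' = n1 N g + n1 N g'"
  unfolding n1_def card_filter_eq_sum by (rule row_swap_sum)

lemma row_swap_n12: "row_swap N g g' h h' \<Longrightarrow> n12 N h + n12 N h' = n12 N g + n12 N g'"
  unfolding n12_def card_filter_eq_sum by (rule row_swap_sum)

lemma row_swap_labelling:
  "row_swap N g g' h h' \<Longrightarrow> labelling N g \<Longrightarrow> labelling N g' \<Longrightarrow> labelling N h \<and> labelling N h'"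
  unfolding row_swap_def labelling_def by metis

definition mixed_rows :: "nat \<Rightarrow> (nat \<Rightarrow> nat) \<Rightarrow> (nat \<Rightarrow> nat) \<Rightarrow> nat \<Rightarrow> nat \<Rightarrow> nat set" where
  "mixed_rows N g g' s t = {i\<in>{1..N}. (g i = s \<and> g' i = t) \<or> (g i = t \<and> g' i = s)}"

lemma n1_add_n1:
  assumes "labelling N g" "labelling N g'"
  shows "n1 N g + n1 N g' = 2 * card {i\<in>{1..N}. g i = 1 \<and> g' i = 1}
    + card (mixed_rows N g g' 1 2) + card (mixed_rows N g g' 1 3)"
proof -
  let ?A = "{i\<in>{1..N}. g i = 1}" and ?B = "{i\<in>{1..N}. g' i = 1}"
    and ?E = "{i\<in>{1..N}. g i = 1 \<and> g' i = 1}"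
    and ?M = "mixed_rows N g g' 1 2" and ?M' = "mixed_rows N g g' 1 3"
  have int: "?A \<inter> ?B = ?E" by auto
  have un: "?A \<union> ?B = ?E \<union> ?M \<union> ?M'"
  proof (rule set_eqI)
    fix i
    have "i \<in> {1..N} \<Longrightarrow> g i \<in> {1, 2, 3} \<and> g' i \<in> {1, 2, 3}"
      using assms by (simp add: labelling_def)
    then show "i \<in> ?A \<union> ?B \<longleftrightarrow> i \<in> ?E \<union> ?M \<union> ?M'" unfolding mixed_rows_def by auto
  qed
  have card_un: "card (?E \<union> ?M \<union> ?M') = card ?E + card ?M + card ?M'"
  proof -
    have "card (?E \<union> ?M \<union> ?M') = card (?E \<union> ?M) + card ?M'"
      by (rule card_Un_disjoint) (auto simp: mixed_rows_def)
    also have "card (?E \<union> ?M) = card ?E + card ?M"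
      by (rule card_Un_disjoint) (auto simp: mixed_rows_def)
    finally show ?thesis .
  qed
  have "card ?A + card ?B = card (?A \<union> ?B) + card (?A \<inter> ?B)" by (rule card_Un_Int) auto
  then show ?thesis unfolding int un card_un n1_def by simp
qed

lemma n12_add_n12:
  assumes "labelling N g" "labelling N g'"
  shows "n12 N g + n12 N g' = 2 * card {i\<in>{1..N}. g i \<le> 2 \<and> g' i \<le> 2}
    + card (mixed_rows N g g' 1 3) + card (mixed_rows N g g' 2 3)"
proof -
  let ?A = "{i\<in>{1..N}. g i \<le> 2}" and ?B = "{i\<in>{1..N}. g' i \<le> 2}"
    and ?E = "{i\<in>{1..N}. g i \<le> 2 \<and> g' i \<le> 2}"
    and ?M = "mixed_rows N g g' 1 3" and ?M' = "mixed_rows N g g' 2 3"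
  have int: "?A \<inter> ?B = ?E" by auto
  have un: "?A \<union> ?B = ?E \<union> ?M \<union> ?M'"
  proof (rule set_eqI)
    fix i
    have "i \<in> {1..N} \<Longrightarrow> g i \<in> {1, 2, 3} \<and> g' i \<in> {1, 2, 3}"
      using assms by (simp add: labelling_def)
    then show "i \<in> ?A \<union> ?B \<longleftrightarrow> i \<in> ?E \<union> ?M \<union> ?M'" unfolding mixed_rows_def by auto
  qed
  have card_un: "card (?E \<union> ?M \<union> ?M') = card ?E + card ?M + card ?M'"
  proof -
    have "card (?E \<union> ?M \<union> ?M') = card (?E \<union> ?M) + card ?M'"
      by (rule card_Un_disjoint) (auto simp: mixed_rows_def)
    also have "card (?E \<union> ?M) = card ?E + card ?M"
      by (rule card_Un_disjoint) (auto simp: mixed_rows_def)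
    finally show ?thesis .
  qed
  have "card ?A + card ?B = card (?A \<union> ?B) + card (?A \<inter> ?B)" by (rule card_Un_Int) auto
  then show ?thesis unfolding int un card_un n12_def by simp
qed

definition min_on :: "nat set \<Rightarrow> (nat \<Rightarrow> nat) \<Rightarrow> (nat \<Rightarrow> nat) \<Rightarrow> nat \<Rightarrow> nat" where
  "min_on X g g' i = (if i \<in> X then min (g i) (g' i) else max (g i) (g' i))"

lemma row_swap_min_on: "row_swap N g g' (min_on X g g') (min_on (- X) g g')"
  unfolding row_swap_def min_on_def by (auto simp: min_def max_def)

lemma n1_min_on:
  assumes "labelling N g" "labelling N g'"
  shows "n1 N (min_on X g g') = card {i\<in>{1..N}. g i = 1 \<and> g' i = 1}
    + card (X \<inter> mixed_rows N g g' 1 2) + card (X \<inter> mixed_rows N g g' 1 3)"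
proof -
  let ?E = "{i\<in>{1..N}. g i = 1 \<and> g' i = 1}"
    and ?M = "X \<inter> mixed_rows N g g' 1 2" and ?M' = "X \<inter> mixed_rows N g g' 1 3"
  have "{i\<in>{1..N}. min_on X g g' i = 1} = ?E \<union> ?M \<union> ?M'"
  proof (rule set_eqI)
    fix i
    have "i \<in> {1..N} \<Longrightarrow> g i \<in> {1, 2, 3} \<and> g' i \<in> {1, 2, 3}"
      using assms by (simp add: labelling_def)
    then show "i \<in> {i\<in>{1..N}. min_on X g g' i = 1} \<longleftrightarrow> i \<in> ?E \<union> ?M \<union> ?M'"
      unfolding mixed_rows_def min_on_def by auto
  qed
  moreover have "card (?E \<union> ?M \<union> ?M') = card (?E \<union> ?M) + card ?M'"
    by (rule card_Un_disjoint) (auto simp: mixed_rows_def)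
  moreover have "card (?E \<union> ?M) = card ?E + card ?M"
    by (rule card_Un_disjoint) (auto simp: mixed_rows_def)
  ultimately show ?thesis unfolding n1_def by simp
qed

lemma n12_min_on:
  assumes "labelling N g" "labelling N g'"
  shows "n12 N (min_on X g g') = card {i\<in>{1..N}. g i \<le> 2 \<and> g' i \<le> 2}
    + card (X \<inter> mixed_rows N g g' 1 3) + card (X \<inter> mixed_rows N g g' 2 3)"
proof -
  let ?E = "{i\<in>{1..N}. g i \<le> 2 \<and> g' i \<le> 2}"
    and ?M = "X \<inter> mixed_rows N g g' 1 3" and ?M' = "X \<inter> mixed_rows N g g' 2 3"
  have "{i\<in>{1..N}. min_on X g g' i \<le> 2} = ?E \<union> ?M \<union> ?M'"
  proof (rule set_eqI)
    fix i
    have "i \<in> {1..N} \<Longrightarrow> g i \<in> {1, 2, 3} \<and> g' i \<in> {1, 2, 3}"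
      using assms by (simp add: labelling_def)
    then show "i \<in> {i\<in>{1..N}. min_on X g g' i \<le> 2} \<longleftrightarrow> i \<in> ?E \<union> ?M \<union> ?M'"
      unfolding mixed_rows_def min_on_def by auto
  qed
  moreover have "card (?E \<union> ?M \<union> ?M') = card (?E \<union> ?M) + card ?M'"
    by (rule card_Un_disjoint) (auto simp: mixed_rows_def)
  moreover have "card (?E \<union> ?M) = card ?E + card ?M"
    by (rule card_Un_disjoint) (auto simp: mixed_rows_def)
  ultimately show ?thesis unfolding n12_def by simp
qed

lemma half_sum_parity: "e + (if odd b then a div 2 else (a + 1) div 2) + (b + 1) div 2 = (2 * e + a + b + 1) div (2::nat)"
  by (cases "odd b") (auto elim!: oddE evenE)

text \<open>The rows of type 1-3 enter both counts, so the numbers \<open>k12\<close>, \<open>k23\<close> of exchanged rows of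
  types 1-2 and 2-3 are adjusted to the parity of their number.\<close>
lemma balanced_swap:
  assumes g: "labelling N g" and g': "labelling N g'"
  shows "\<exists>h h'. row_swap N g g' h h' \<and> n1 N h = (n1 N g + n1 N g' + 1) div 2
    \<and> n12 N h = (n12 N g + n12 N g' + 1) div 2"
proof -
  let ?M = "mixed_rows N g g'"
  define k13 where "k13 = (card (?M 1 3) + 1) div 2"
  define k12 where "k12 = (if odd (card (?M 1 3)) then card (?M 1 2) div 2 else (card (?M 1 2) + 1) div 2)"
  define k23 where "k23 = (if odd (card (?M 1 3)) then card (?M 2 3) div 2 else (card (?M 2 3) + 1) div 2)"
  have "k12 \<le> card (?M 1 2)" unfolding k12_def by auto
  then obtain X12 where X12: "X12 \<subseteq> ?M 1 2" "card X12 = k12" by (meson obtain_subset_with_card_n)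
  have "k13 \<le> card (?M 1 3)" unfolding k13_def by auto
  then obtain X13 where X13: "X13 \<subseteq> ?M 1 3" "card X13 = k13" by (meson obtain_subset_with_card_n)
  have "k23 \<le> card (?M 2 3)" unfolding k23_def by auto
  then obtain X23 where X23: "X23 \<subseteq> ?M 2 3" "card X23 = k23" by (meson obtain_subset_with_card_n)
  define X where "X = X12 \<union> X13 \<union> X23"
  have "X \<inter> ?M 1 2 = X12" "X \<inter> ?M 1 3 = X13" "X \<inter> ?M 2 3 = X23"
    using X12(1) X13(1) X23(1) unfolding X_def mixed_rows_def by auto
  then have "n1 N (min_on X g g') = card {i\<in>{1..N}. g i = 1 \<and> g' i = 1} + k12 + k13"
    "n12 N (min_on X g g') = card {i\<in>{1..N}. g i \<le> 2 \<and> g' i \<le> 2} + k23 + k13"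
    unfolding n1_min_on[OF g g'] n12_min_on[OF g g'] using X12(2) X13(2) X23(2) by simp_all
  moreover have "n1 N g + n1 N g' + 1 = 2 * card {i\<in>{1..N}. g i = 1 \<and> g' i = 1}
      + card (?M 1 2) + card (?M 1 3) + 1"
    "n12 N g + n12 N g' + 1 = 2 * card {i\<in>{1..N}. g i \<le> 2 \<and> g' i \<le> 2}
      + card (?M 2 3) + card (?M 1 3) + 1"
    using n1_add_n1[OF g g'] n12_add_n12[OF g g'] by simp_all
  ultimately have "n1 N (min_on X g g') = (n1 N g + n1 N g' + 1) div 2"
    "n12 N (min_on X g g') = (n12 N g + n12 N g' + 1) div 2"
    unfolding k12_def k13_def k23_def by (simp_all only: half_sum_parity)
  then show ?thesis using row_swap_min_on by blast
qed

lemma halves_int: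
  assumes "A = (S + 1) div 2" "A + B = (S::nat)"
  shows "int A = (int S + 1) div 2" "int B = int S div 2"
proof -
  obtain k where "S = 2 * k \<or> S = 2 * k + 1" by (metis oddE evenE)
  then show "int A = (int S + 1) div 2" "int B = int S div 2" using assms by auto
qed

lemma balanced_swap_int:
  assumes g: "labelling N g" and g': "labelling N g'"
  obtains h h' where "row_swap N g g' h h'" "labelling N h" "labelling N h'"
    "int (n1 N h) = (int (n1 N g) + int (n1 N g') + 1) div 2"
    "int (n1 N h') = (int (n1 N g) + int (n1 N g')) div 2"
    "int (n12 N h) = (int (n12 N g) + int (n12 N g') + 1) div 2"
    "int (n12 N h') = (int (n12 N g) + int (n12 N g')) div 2"
proof -
  obtain h h' where s: "row_swap N g g' h h'"
    and h1: "n1 N h = (n1 N g + n1 N g' + 1) div 2" and h2: "n12 N h = (n12 N g + n12 N g' + 1) div 2"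
    using balanced_swap[OF g g'] by blast
  show ?thesis
    using that[OF s row_swap_labelling[OF s g g', THEN conjunct1] row_swap_labelling[OF s g g', THEN conjunct2]]
      halves_int[OF h1 row_swap_n1[OF s]] halves_int[OF h2 row_swap_n12[OF s]]
    by simp
qed

lemma exchange_swap:
  assumes g: "labelling N g" and g': "labelling N g'"
    and n1: "n1 N g = n1 N g' + 1" and n12: "n12 N g = n12 N g'"
  obtains h h' where "row_swap N g g' h h'" "n1 N h + 1 = n1 N g" "n12 N h = n12 N g"
    | h h' where "row_swap N g g' h h'" "n1 N h = n1 N g" "n12 N h = n12 N g + 1"
proof -
  let ?R = "{1..N}"
  have n12_split: "n12 N f = n1 N f + card {i\<in>?R. f i = 2}" if "labelling N f" for f
  proof -
    have "{i\<in>?R. f i \<le> 2} = {i\<in>?R. f i = 1} \<union> {i\<in>?R. f i = 2}"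
      using that unfolding labelling_def by auto
    then show ?thesis unfolding n12_def n1_def by (simp add: card_Un_disjoint disjoint_iff)
  qed
  have "card {i\<in>?R. g i = 2} + 1 = card {i\<in>?R. g' i = 2}"
    using n12_split[OF g] n12_split[OF g'] n1 n12 by simp
  then have "\<not> {i\<in>?R. g' i = 2} \<subseteq> {i\<in>?R. g i = 2}"
    using card_mono[of "{i\<in>?R. g i = 2}" "{i\<in>?R. g' i = 2}"] by auto
  then obtain i0 where i0: "i0 \<in> ?R" "g' i0 = 2" "g i0 \<noteq> 2" by auto
  have gi0: "g i0 = 1 \<or> g i0 = 3" using g i0 unfolding labelling_def by auto
  define h where "h = g(i0 := 2)"
  define h' where "h' = g'(i0 := g i0)"
  have s: "row_swap N g g' h h'" unfolding row_swap_def h_def h'_def using i0 by auto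
  show ?thesis
  proof (cases "g i0 = 1")
    case True
    have "{i\<in>?R. h i = 1} = {i\<in>?R. g i = 1} - {i0}" "{i\<in>?R. h i \<le> 2} = {i\<in>?R. g i \<le> 2}"
      unfolding h_def using True i0 by auto
    moreover have "i0 \<in> {i\<in>?R. g i = 1}" using True i0 by simp
    ultimately show ?thesis using that(1)[OF s] card_Suc_Diff1[of "{i\<in>?R. g i = 1}" i0]
      unfolding n1_def n12_def by simp
  next
    case False
    then have g3: "g i0 = 3" using gi0 by simp
    have "{i\<in>?R. h i = 1} = {i\<in>?R. g i = 1}" "{i\<in>?R. h i \<le> 2} = insert i0 {i\<in>?R. g i \<le> 2}"
      unfolding h_def using g3 i0 by auto
    then show ?thesis using that(2)[OF s] g3 unfolding n1_def n12_def by simp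
  qed
qed

section \<open>The three-term identity\<close>

definition UP_pair :: "(nat \<Rightarrow> nat \<Rightarrow> real) \<Rightarrow> nat \<Rightarrow> nat \<Rightarrow> nat \<Rightarrow> nat \<Rightarrow> real" where
  "UP_pair v N x y z = UP_cols N v (del1 N x) + UP_cols N v (del2 N y z)"

definition pair_value :: "(nat \<Rightarrow> nat \<Rightarrow> real) \<Rightarrow> (nat \<Rightarrow> real) \<Rightarrow> nat \<Rightarrow> nat \<Rightarrow> nat \<Rightarrow> nat
    \<Rightarrow> (nat \<Rightarrow> nat) \<Rightarrow> (nat \<Rightarrow> nat) \<Rightarrow> real" where
  "pair_value W q N x y z g g' = label_weight W N g + label_weight W N g'
     + rearr_value N q (col_key (del1 N x)) g + rearr_value N q (col_key (del2 N y z)) g'"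

lemma UP_pair_le_pair_value:
  assumes "x \<le> N" "y < z" "z \<le> N + 1" and q: "q 1 \<le> q 2" "q 2 \<le> q 3"
  obtains g g' where "labelling N g" "labelling N g'"
    "UP_pair (trop_col W q) N x y z \<le> pair_value W q N x y z g g'"
proof -
  obtain g where "labelling N g" "UP_cols N (trop_col W q) (del1 N x)
      \<le> label_weight W N g + rearr_value N q (col_key (del1 N x)) g"
    using UP_cols_trop_col_le[OF mono_col_key_del1[OF assms(1)] q] by blast
  moreover obtain g' where "labelling N g'" "UP_cols N (trop_col W q) (del2 N y z)
      \<le> label_weight W N g' + rearr_value N q (col_key (del2 N y z)) g'"
    using UP_cols_trop_col_le[OF mono_col_key_del2[OF assms(2,3)] q] by blast
  ultimately show ?thesis using that unfolding UP_pair_def pair_value_def by fastforce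
qed

lemma pair_value_le_UP_pair:
  "labelling N g \<Longrightarrow> labelling N g' \<Longrightarrow> pair_value W q N x y z g g' \<le> UP_pair (trop_col W q) N x y z"
  unfolding UP_pair_def pair_value_def using UP_cols_trop_col_ge[of N] by (smt (verit))

lemma UP_pair_le_of_dominated:
  assumes "x \<le> N" "y < z" "z \<le> N + 1" and q: "q 1 \<le> q 2" "q 2 \<le> q 3"
    and dominated: "\<And>g g'. labelling N g \<Longrightarrow> labelling N g' \<Longrightarrow>
      \<exists>h h'. labelling N h \<and> labelling N h' \<and> pair_value W q N x y z g g' \<le> pair_value W q N x' y' z' h h'"
  shows "UP_pair (trop_col W q) N x y z \<le> UP_pair (trop_col W q) N x' y' z'"
proof -
  obtain g g' where g: "labelling N g" "labelling N g'"
    and le: "UP_pair (trop_col W q) N x y z \<le> pair_value W q N x y z g g'"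
    using UP_pair_le_pair_value[OF assms(1-3) q] .
  obtain h h' where h: "labelling N h" "labelling N h'"
    and "pair_value W q N x y z g g' \<le> pair_value W q N x' y' z' h h'"
    using dominated[OF g] by blast
  then show ?thesis using le pair_value_le_UP_pair[OF h, of W q x' y' z'] by linarith
qed

lemma rearr_value_pair:
  "rearr_value N q (col_key (del1 N x)) g + rearr_value N q (col_key (del2 N y z)) g'
    = q 1 * pair_top N x y z 0 0 + (q 2 - q 1) * pair_top N x y z (n1 N g) (n1 N g')
      + (q 3 - q 2) * pair_top N x y z (n12 N g) (n12 N g')"
  unfolding rearr_value_def pair_top_def by (simp add: algebra_simps)

lemma pair_top_zero_zero:
  assumes "x \<le> N" "y < z" "z \<le> N + 1"
  shows "2 * pair_top N x y z 0 0 = 2 * real N * (real N - 1) + 6 * real N - 2 * (real x + real y + real z - 1)"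
proof -
  have "psi (int x) (int y) (int z) 0 0 = - 2 * (int x + int y + int z - 1)"
    using assms by (simp add: psi_def max_def)
  then show ?thesis using pair_top_psi[OF assms, of 0 0] by simp
qed

text \<open>Swapping rows leaves the label weights alone, the term with \<open>q 1\<close> depends only on
  \<open>x + y + z\<close>, and the other two terms are monotone in \<open>psi\<close> since \<open>q\<close> is increasing.\<close>
lemma pair_value_le_of_psi_le:
  fixes x1 y1 z1 x2 y2 z2 :: nat
  assumes v1: "x1 \<le> N" "y1 < z1" "z1 \<le> N + 1" and v2: "x2 \<le> N" "y2 < z2" "z2 \<le> N + 1"
    and sum_eq: "x1 + y1 + z1 = x2 + y2 + z2"
    and lab: "labelling N g" "labelling N g'" "labelling N h" "labelling N h'"
    and swap: "row_swap N g g' h h'" and q: "q 1 \<le> q 2" "q 2 \<le> q 3"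
    and psi1: "psi (int x1) (int y1) (int z1) (int (n1 N g)) (int (n1 N g'))
      \<le> psi (int x2) (int y2) (int z2) (int (n1 N h)) (int (n1 N h'))"
    and psi12: "psi (int x1) (int y1) (int z1) (int (n12 N g)) (int (n12 N g'))
      \<le> psi (int x2) (int y2) (int z2) (int (n12 N h)) (int (n12 N h'))"
  shows "pair_value W q N x1 y1 z1 g g' \<le> pair_value W q N x2 y2 z2 h h'"
proof -
  have bounds: "n1 N f \<le> N" "n12 N f \<le> N" if "labelling N f" for f
    using that n1_le n12_le by auto
  have top0: "pair_top N x1 y1 z1 0 0 = pair_top N x2 y2 z2 0 0"
    using pair_top_zero_zero[OF v1] pair_top_zero_zero[OF v2] sum_eq by simp
  have top1: "pair_top N x1 y1 z1 (n1 N g) (n1 N g') \<le> pair_top N x2 y2 z2 (n1 N h) (n1 N h')"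
    using pair_top_psi[OF v1 bounds(1)[OF lab(1)] bounds(1)[OF lab(2)]]
      pair_top_psi[OF v2 bounds(1)[OF lab(3)] bounds(1)[OF lab(4)]] psi1 by linarith
  have top12: "pair_top N x1 y1 z1 (n12 N g) (n12 N g') \<le> pair_top N x2 y2 z2 (n12 N h) (n12 N h')"
    using pair_top_psi[OF v1 bounds(2)[OF lab(1)] bounds(2)[OF lab(2)]]
      pair_top_psi[OF v2 bounds(2)[OF lab(3)] bounds(2)[OF lab(4)]] psi12 by linarith
  have "(q 2 - q 1) * pair_top N x1 y1 z1 (n1 N g) (n1 N g') \<le> (q 2 - q 1) * pair_top N x2 y2 z2 (n1 N h) (n1 N h')"
    "(q 3 - q 2) * pair_top N x1 y1 z1 (n12 N g) (n12 N g') \<le> (q 3 - q 2) * pair_top N x2 y2 z2 (n12 N h) (n12 N h')"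
    using top1 top12 q by (simp_all add: mult_left_mono)
  then show ?thesis
    unfolding pair_value_def add.assoc[of "label_weight W N _"] rearr_value_pair top0
    using row_swap_label_weight[OF swap, of W] by linarith
qed

lemma pair_value_cab_dominated:
  assumes q: "q 1 \<le> q 2" "q 2 \<le> q 3" and abc: "a < b" "b < c" "c \<le> N"
    and g: "labelling N g" "labelling N g'"
  shows "\<exists>h h'. labelling N h \<and> labelling N h' \<and> pair_value W q N c a b g g' \<le> pair_value W q N b a c h h'"
proof -
  obtain h h' where s: "row_swap N g g' h h'" and h: "labelling N h" "labelling N h'"
    and n: "int (n1 N h) = (int (n1 N g) + int (n1 N g') + 1) div 2"
      "int (n1 N h') = (int (n1 N g) + int (n1 N g')) div 2"
      "int (n12 N h) = (int (n12 N g) + int (n12 N g') + 1) div 2"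
      "int (n12 N h') = (int (n12 N g) + int (n12 N g')) div 2"
    using balanced_swap_int[OF g] .
  have "pair_value W q N c a b g g' \<le> pair_value W q N b a c h h'"
    by (rule pair_value_le_of_psi_le[OF _ _ _ _ _ _ _ g h s q], unfold n)
      (use abc in \<open>auto intro: psi_cab_le_bac_balanced\<close>)
  then show ?thesis using h by blast
qed

lemma pair_value_abc_dominated:
  assumes q: "q 1 \<le> q 2" "q 2 \<le> q 3" and abc: "a < b" "b < c" "c \<le> N"
    and g: "labelling N g" "labelling N g'"
  shows "\<exists>h h'. labelling N h \<and> labelling N h' \<and> pair_value W q N a b c g g' \<le> pair_value W q N b a c h h'"
proof -
  obtain h h' where s: "row_swap N g g' h h'" and h: "labelling N h" "labelling N h'"
    and n: "int (n1 N h) = (int (n1 N g) + int (n1 N g') + 1) div 2"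
      "int (n1 N h') = (int (n1 N g) + int (n1 N g')) div 2"
      "int (n12 N h) = (int (n12 N g) + int (n12 N g') + 1) div 2"
      "int (n12 N h') = (int (n12 N g) + int (n12 N g')) div 2"
    using balanced_swap_int[OF g] .
  have "pair_value W q N a b c g g' \<le> pair_value W q N b a c h h'"
    by (rule pair_value_le_of_psi_le[OF _ _ _ _ _ _ _ g h s q], unfold n)
      (use abc in \<open>auto intro: psi_abc_le_bac_balanced\<close>)
  then show ?thesis using h by blast
qed

text \<open>The one configuration that balancing does not resolve: there a single row is moved to
  label 2, which shifts either the first or the second count by one.\<close>
lemma pair_value_bac_dominated_exceptional:
  assumes q: "q 1 \<le> q 2" "q 2 \<le> q 3" and abc: "a < b" "b < c" "c \<le> N"
    and g: "labelling N g" "labelling N g'"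
    and n1: "n1 N g = n1 N g' + 1" "a < n1 N g" "n1 N g \<le> b"
    and n12: "n12 N g = n12 N g'" "b \<le> n12 N g" "n12 N g < c"
  shows "\<exists>h h'. labelling N h \<and> labelling N h'
    \<and> (pair_value W q N b a c g g' \<le> pair_value W q N a b c h h'
      \<or> pair_value W q N b a c g g' \<le> pair_value W q N c a b h h')"
proof -
  have int_a: "0 \<le> int a" "int a < int b" "int b < int c" using abc by auto
  have valid: "b \<le> N" "a < c" "c \<le> N + 1" "a \<le> N" "b \<le> N + 1" using abc by auto
  from exchange_swap[OF g n1(1) n12(1)] show ?thesis
  proof cases
    case (1 h h')
    have h: "labelling N h" "labelling N h'" using row_swap_labelling[OF 1(1) g] by auto
    have n: "int (n1 N h) = int (n1 N g) - 1" "int (n1 N h') = int (n1 N g)"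
      "n12 N h = n12 N g" "n12 N h' = n12 N g"
      using 1 row_swap_n1[OF 1(1)] row_swap_n12[OF 1(1)] n1(1) n12(1) by auto
    have "pair_value W q N b a c g g' \<le> pair_value W q N a b c h h'"
    proof (rule pair_value_le_of_psi_le[OF valid(1-3) valid(4) abc(2) valid(3) _ g h 1(1) q])
      show "psi (int b) (int a) (int c) (int (n1 N g)) (int (n1 N g'))
        \<le> psi (int a) (int b) (int c) (int (n1 N h)) (int (n1 N h'))"
        unfolding n using psi_bac_le_abc_shift[OF int_a(2,3), of "int (n1 N g)"] n1 by simp
      show "psi (int b) (int a) (int c) (int (n12 N g)) (int (n12 N g'))
        \<le> psi (int a) (int b) (int c) (int (n12 N h)) (int (n12 N h'))"
        unfolding n n12(1)[symmetric]
        using psi_bac_le_abc_balanced[OF int_a, of "int (n12 N g)" "int (n12 N g)"] by simp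
    qed simp
    then show ?thesis using h by blast
  next
    case (2 h h')
    have h: "labelling N h" "labelling N h'" using row_swap_labelling[OF 2(1) g] by auto
    have n: "n1 N h = n1 N g" "n1 N h' = n1 N g'"
      "int (n12 N h) = int (n12 N g) + 1" "int (n12 N h') = int (n12 N g) - 1"
      using 2 row_swap_n1[OF 2(1)] row_swap_n12[OF 2(1)] n1(1) n12(1) by auto
    have "pair_value W q N b a c g g' \<le> pair_value W q N c a b h h'"
    proof (rule pair_value_le_of_psi_le[OF valid(1-3) abc(3) abc(1) valid(5) _ g h 2(1) q])
      show "psi (int b) (int a) (int c) (int (n1 N g)) (int (n1 N g'))
        \<le> psi (int c) (int a) (int b) (int (n1 N h)) (int (n1 N h'))"
        unfolding n using psi_bac_le_cab_balanced[OF int_a, of "int (n1 N g)" "int (n1 N g')"] n1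
        by simp
      show "psi (int b) (int a) (int c) (int (n12 N g)) (int (n12 N g'))
        \<le> psi (int c) (int a) (int b) (int (n12 N h)) (int (n12 N h'))"
        unfolding n n12(1)[symmetric] using psi_bac_le_cab_shift[OF int_a(2,3)] n12 by simp
    qed simp
    then show ?thesis using h by blast
  qed
qed

lemma pair_value_bac_dominated:
  assumes q: "q 1 \<le> q 2" "q 2 \<le> q 3" and abc: "a < b" "b < c" "c \<le> N"
    and g: "labelling N g" "labelling N g'"
  shows "\<exists>h h'. labelling N h \<and> labelling N h'
    \<and> (pair_value W q N b a c g g' \<le> pair_value W q N a b c h h'
      \<or> pair_value W q N b a c g g' \<le> pair_value W q N c a b h h')"
proof -
  obtain h h' where s: "row_swap N g g' h h'" and h: "labelling N h" "labelling N h'"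
    and n: "int (n1 N h) = (int (n1 N g) + int (n1 N g') + 1) div 2"
      "int (n1 N h') = (int (n1 N g) + int (n1 N g')) div 2"
      "int (n12 N h) = (int (n12 N g) + int (n12 N g') + 1) div 2"
      "int (n12 N h') = (int (n12 N g) + int (n12 N g')) div 2"
    using balanced_swap_int[OF g] .
  have valid: "b \<le> N" "a < c" "c \<le> N + 1" "a \<le> N" "b \<le> N + 1" using abc by auto
  consider
    (to_cab) "\<not> (n1 N g = n1 N g' \<and> b \<le> n1 N g \<and> n1 N g < c)"
      "\<not> (n12 N g = n12 N g' \<and> b \<le> n12 N g \<and> n12 N g < c)"
    | (to_abc) "\<not> (n1 N g = n1 N g' + 1 \<and> a < n1 N g \<and> n1 N g \<le> b)"
      "\<not> (n12 N g = n12 N g' + 1 \<and> a < n12 N g \<and> n12 N g \<le> b)"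
    | (exceptional) "n1 N g = n1 N g' + 1" "a < n1 N g" "n1 N g \<le> b"
      "n12 N g = n12 N g'" "b \<le> n12 N g" "n12 N g < c"
    using n1_le_n12[OF g(1)] n1_le_n12[OF g(2)] abc by linarith
  then show ?thesis
  proof cases
    case to_cab
    have "pair_value W q N b a c g g' \<le> pair_value W q N c a b h h'"
      by (rule pair_value_le_of_psi_le[OF valid(1-3) abc(3) abc(1) valid(5) _ g h s q], unfold n)
        (use abc to_cab in \<open>auto intro!: psi_bac_le_cab_balanced\<close>)
    then show ?thesis using h by blast
  next
    case to_abc
    have "pair_value W q N b a c g g' \<le> pair_value W q N a b c h h'"
      by (rule pair_value_le_of_psi_le[OF valid(1-3) valid(4) abc(2) valid(3) _ g h s q], unfold n)
        (use abc to_abc in \<open>auto intro!: psi_bac_le_abc_balanced\<close>)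
    then show ?thesis using h by blast
  next
    case exceptional
    show ?thesis by (rule pair_value_bac_dominated_exceptional[OF q abc g exceptional])
  qed
qed

lemma UP_pair_bac_le_max:
  assumes q: "q 1 \<le> q 2" "q 2 \<le> q 3" and abc: "a < b" "b < c" "c \<le> N"
  shows "UP_pair (trop_col W q) N b a c
    \<le> max (UP_pair (trop_col W q) N c a b) (UP_pair (trop_col W q) N a b c)"
proof -
  obtain g g' where g: "labelling N g" "labelling N g'"
    and le: "UP_pair (trop_col W q) N b a c \<le> pair_value W q N b a c g g'"
    using UP_pair_le_pair_value[where W = W, OF _ _ _ q, of b N a c] abc by auto
  obtain h h' where h: "labelling N h" "labelling N h'"
    and "pair_value W q N b a c g g' \<le> pair_value W q N a b c h h'
      \<or> pair_value W q N b a c g g' \<le> pair_value W q N c a b h h'"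
    using pair_value_bac_dominated[OF q abc g] by blast
  then show ?thesis
    using le pair_value_le_UP_pair[OF h, of W q a b c] pair_value_le_UP_pair[OF h, of W q c a b]
    by linarith
qed

lemma UP_pair_trop_col_identity:
  assumes q: "q 1 \<le> q 2" "q 2 \<le> q 3" and abc: "a < b" "b < c" "c \<le> N"
  shows "UP_pair (trop_col W q) N b a c
    = max (UP_pair (trop_col W q) N c a b) (UP_pair (trop_col W q) N a b c)"
proof -
  have "UP_pair (trop_col W q) N c a b \<le> UP_pair (trop_col W q) N b a c"
    using abc by (intro UP_pair_le_of_dominated[OF _ _ _ q] pair_value_cab_dominated[OF q abc]) auto
  moreover have "UP_pair (trop_col W q) N a b c \<le> UP_pair (trop_col W q) N b a c"
    using abc by (intro UP_pair_le_of_dominated[OF _ _ _ q] pair_value_abc_dominated[OF q abc]) auto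
  ultimately show ?thesis using UP_pair_bac_le_max[OF q abc, where W = W] by linarith
qed

section \<open>The functions phi\<close>

lemma eta_shift_s: "eta p a1 a2 a3 j l m n (s + d) = eta p a1 a2 a3 j l m n s + p j * of_int d"
  unfolding eta_def by (simp add: algebra_simps)

lemma eta_succ_l: "eta p a1 a2 a3 j (l + 1) m n s = eta p a1 a2 a3 j l m n s + max 0 (p j - a1)"
  unfolding eta_def by (simp add: algebra_simps)

lemma eta_succ_m: "eta p a1 a2 a3 j l (m + 1) n s = eta p a1 a2 a3 j l m n s + max 0 (p j - a2)"
  unfolding eta_def by (simp add: algebra_simps)

lemma eta_succ_n: "eta p a1 a2 a3 j l m (n + 1) s = eta p a1 a2 a3 j l m n s + max 0 (p j - a3)"
  unfolding eta_def by (simp add: algebra_simps)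

lemma Max_image_max:
  fixes f g :: "'a \<Rightarrow> real"
  assumes "finite A" "A \<noteq> {}"
  shows "Max ((\<lambda>j. max (f j) (g j)) ` A) = max (Max (f ` A)) (Max (g ` A))"
proof (rule antisym)
  show "Max ((\<lambda>j. max (f j) (g j)) ` A) \<le> max (Max (f ` A)) (Max (g ` A))"
  proof (rule Max.boundedI)
    fix x assume "x \<in> (\<lambda>j. max (f j) (g j)) ` A"
    then obtain j where "j \<in> A" "x = max (f j) (g j)" by auto
    moreover have "f j \<le> Max (f ` A)" "g j \<le> Max (g ` A)" using assms \<open>j \<in> A\<close> by auto
    ultimately show "x \<le> max (Max (f ` A)) (Max (g ` A))" by linarith
  qed (use assms in auto)
  have "Max (f ` A) \<in> f ` A" "Max (g ` A) \<in> g ` A" using assms by (simp_all add: Max_in)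
  then obtain j1 j2 where "j1 \<in> A" "Max (f ` A) = f j1" "j2 \<in> A" "Max (g ` A) = g j2" by blast
  moreover have "max (f j) (g j) \<le> Max ((\<lambda>j. max (f j) (g j)) ` A)" if "j \<in> A" for j
    using assms that by (intro Max_ge) auto
  ultimately show "max (Max (f ` A)) (Max (g ` A)) \<le> Max ((\<lambda>j. max (f j) (g j)) ` A)"
    by (simp add: max.bounded_iff)
qed

text \<open>Raising \<open>l\<close> (or \<open>m\<close>, \<open>n\<close>) adds \<open>max 0 (p j - a)\<close> to every \<open>\<eta>\<^sub>j\<close>, i.e. takes the larger of
  \<open>\<eta>\<^sub>j\<close> and \<open>\<eta>\<^sub>j + p j - a\<close>, and the latter is \<open>\<eta>\<^sub>j\<close> at \<open>s + 1\<close> minus \<open>a\<close>.\<close>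
lemma phi_step:
  assumes M: "M \<ge> 1"
    and step: "\<And>j. eta p a1 a2 a3 j l' m' n' s = eta p a1 a2 a3 j l m n s + max 0 (p j - a)"
  shows "phi M c p a1 a2 a3 i l' m' n' s
    = max (phi M c p a1 a2 a3 i l m n s) (phi M c p a1 a2 a3 i l m n (s + 1) - a)"
proof -
  let ?F = "\<lambda>s j. c i j + eta p a1 a2 a3 j l m n s"
  have fin: "finite {1..M}" "{1..M} \<noteq> {}" using M by auto
  have "phi M c p a1 a2 a3 i l' m' n' s = Max ((\<lambda>j. max (?F s j) (?F (s + 1) j + - a)) ` {1..M})"
    unfolding phi_def step
    by (rule arg_cong[where f = Max], rule image_cong[OF refl]) (simp add: eta_shift_s max_def)
  also have "\<dots> = max (phi M c p a1 a2 a3 i l m n s) (phi M c p a1 a2 a3 i l m n (s + 1) - a)"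
    unfolding Max_image_max[OF fin] Max_add_commute[OF fin] phi_def by simp
  finally show ?thesis .
qed

lemma phi_two_rows:
  fixes c :: "nat \<Rightarrow> nat \<Rightarrow> real" and p :: "nat \<Rightarrow> real" and a1 a2 a3 :: real
  assumes M: "M \<ge> 1"
  defines "\<phi> \<equiv> phi M c p a1 a2 a3"
  shows "\<phi> i1 l m n s + \<phi> i2 l m n s
    \<le> max (\<phi> i1 l m n (s - 1) + \<phi> i2 l m n (s + 1)) (\<phi> i2 l m n (s - 1) + \<phi> i1 l m n (s + 1))"
proof -
  have fin: "finite {1..M}" "{1..M} \<noteq> {}" using M by auto
  have attained: "\<exists>j\<in>{1..M}. \<phi> i l m n s = c i j + eta p a1 a2 a3 j l m n s" for i
  proof -
    have "Max ((\<lambda>j. c i j + eta p a1 a2 a3 j l m n s) ` {1..M})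
        \<in> (\<lambda>j. c i j + eta p a1 a2 a3 j l m n s) ` {1..M}"
      using fin by (intro Max_in) auto
    then show ?thesis unfolding \<phi>_def phi_def by blast
  qed
  have ge: "c i j + eta p a1 a2 a3 j l m n t \<le> \<phi> i l m n t" if "j \<in> {1..M}" for i j t
    unfolding \<phi>_def phi_def using fin that by (intro Max_ge) auto
  obtain j1 j2 where j: "j1 \<in> {1..M}" "\<phi> i1 l m n s = c i1 j1 + eta p a1 a2 a3 j1 l m n s"
    "j2 \<in> {1..M}" "\<phi> i2 l m n s = c i2 j2 + eta p a1 a2 a3 j2 l m n s"
    using attained by blast
  \<comment> \<open>the maximising branches give lower bounds \<open>\<phi>(s \<plusminus> 1) \<ge> \<phi>(s) \<plusminus> p j\<close> at the neighbours\<close>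
  have "\<phi> i1 l m n s - p j1 \<le> \<phi> i1 l m n (s - 1)" "\<phi> i1 l m n s + p j1 \<le> \<phi> i1 l m n (s + 1)"
    "\<phi> i2 l m n s - p j2 \<le> \<phi> i2 l m n (s - 1)" "\<phi> i2 l m n s + p j2 \<le> \<phi> i2 l m n (s + 1)"
    using ge[OF j(1), of i1 "s - 1"] ge[OF j(1), of i1 "s + 1"] ge[OF j(3), of i2 "s - 1"]
      ge[OF j(3), of i2 "s + 1"] eta_shift_s[of p a1 a2 a3 _ l m n s "-1"]
      eta_shift_s[of p a1 a2 a3 _ l m n s 1] j(2,4)
    by auto
  then show ?thesis by linarith
qed

lemma exists_sorted_enum3:
  fixes p :: "nat \<Rightarrow> real"
  assumes M: "M \<in> {1, 2, 3}"
  obtains \<tau> :: "nat \<Rightarrow> nat" where "\<tau> ` {1, 2, 3} = {1..M}" "p (\<tau> 1) \<le> p (\<tau> 2)" "p (\<tau> 2) \<le> p (\<tau> 3)"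
proof -
  define xs where "xs = sort_key p [1..<M + 1]"
  have len: "length xs = M" and set_xs: "set xs = {1..M}" and sorted: "sorted (map p xs)"
    unfolding xs_def by auto
  define \<tau> where "\<tau> t = xs ! (min t M - 1)" for t
  have "(\<lambda>t. min t M - 1) ` {1, 2, 3} = {..<M}" using M by auto
  then have "\<tau> ` {1, 2, 3} = (!) xs ` {..<M}" unfolding \<tau>_def by (metis image_image)
  also have "\<dots> = {1..M}" using len set_xs by (auto simp: set_conv_nth)
  finally have image: "\<tau> ` {1, 2, 3} = {1..M}" .
  have "p (\<tau> s) \<le> p (\<tau> t)" if "s \<le> t" for s t
    using sorted_nth_mono[OF sorted, of "min s M - 1" "min t M - 1"] M that len
    unfolding \<tau>_def by auto
  then show ?thesis using that image by simp
qed

lemma phi_eq_trop_col: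
  assumes \<tau>: "\<tau> ` {1, 2, 3} = {1..M}"
  shows "(\<lambda>k i. phi M c p a1 a2 a3 i l m n (int k))
    = trop_col (\<lambda>i t. c i (\<tau> t) + eta p a1 a2 a3 (\<tau> t) l m n 0) (\<lambda>t. p (\<tau> t))"
proof (intro ext)
  fix k i
  have "eta p a1 a2 a3 j l m n (int k) = eta p a1 a2 a3 j l m n 0 + p j * real k" for j
    using eta_shift_s[of p a1 a2 a3 j l m n 0 "int k"] by simp
  then show "phi M c p a1 a2 a3 i l m n (int k)
    = trop_col (\<lambda>i t. c i (\<tau> t) + eta p a1 a2 a3 (\<tau> t) l m n 0) (\<lambda>t. p (\<tau> t)) k i"
    unfolding phi_def trop_col_def \<tau>[symmetric] image_image by (simp add: add.assoc)
qed

theorem proposition4p2: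
  fixes N M :: nat and a1 a2 a3 :: real
    and c :: "nat \<Rightarrow> nat \<Rightarrow> real" and p :: "nat \<Rightarrow> real"
  assumes "N \<ge> 1" and "M \<ge> 1"
  defines "\<phi> \<equiv> phi M c p a1 a2 a3"
  shows
   "(\<forall>i l m n s. 1 \<le> i \<and> i \<le> N \<longrightarrow>
        \<phi> i (l + 1) m n s = max (\<phi> i l m n s) (\<phi> i l m n (s + 1) - a1)
      \<and> \<phi> i l (m + 1) n s = max (\<phi> i l m n s) (\<phi> i l m n (s + 1) - a2)
      \<and> \<phi> i l m (n + 1) s = max (\<phi> i l m n s) (\<phi> i l m n (s + 1) - a3))
  \<and> (\<forall>i1 i2 l m n s. 1 \<le> i1 \<and> i1 \<le> N \<and> 1 \<le> i2 \<and> i2 \<le> N \<longrightarrow>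
        \<phi> i1 l m n s + \<phi> i2 l m n s
          \<le> max (\<phi> i1 l m n (s - 1) + \<phi> i2 l m n (s + 1))
                (\<phi> i2 l m n (s - 1) + \<phi> i1 l m n (s + 1)))
  \<and> (M \<in> {1, 2, 3} \<longrightarrow>
      (\<forall>l m n k1 k2 k3. k1 < k2 \<and> k2 < k3 \<and> k3 \<le> N \<longrightarrow>
        (let v = (\<lambda>k i. \<phi> i l m n (int k));
             C1 = (\<lambda>x. [k \<leftarrow> [0..<N + 1]. k \<noteq> x]);
             C2 = (\<lambda>x y. [k \<leftarrow> [0..<N + 2]. k \<noteq> x \<and> k \<noteq> y])
         in UP_cols N v (C1 k2) + UP_cols N v (C2 k1 k3)
            = max (UP_cols N v (C1 k3) + UP_cols N v (C2 k1 k2))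
                  (UP_cols N v (C1 k1) + UP_cols N v (C2 k2 k3)))))"
proof -
  have shifts: "\<phi> i (l + 1) m n s = max (\<phi> i l m n s) (\<phi> i l m n (s + 1) - a1)"
    "\<phi> i l (m + 1) n s = max (\<phi> i l m n s) (\<phi> i l m n (s + 1) - a2)"
    "\<phi> i l m (n + 1) s = max (\<phi> i l m n s) (\<phi> i l m n (s + 1) - a3)" for i l m n s
    unfolding \<phi>_def by (rule phi_step[OF assms(2) eta_succ_l] phi_step[OF assms(2) eta_succ_m] phi_step[OF assms(2) eta_succ_n])+
  have two_rows: "\<phi> i1 l m n s + \<phi> i2 l m n s
      \<le> max (\<phi> i1 l m n (s - 1) + \<phi> i2 l m n (s + 1)) (\<phi> i2 l m n (s - 1) + \<phi> i1 l m n (s + 1))"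
    for i1 i2 l m n s
    unfolding \<phi>_def by (rule phi_two_rows[OF assms(2)])
  have identity: "UP_pair (\<lambda>k i. \<phi> i l m n (int k)) N k2 k1 k3
      = max (UP_pair (\<lambda>k i. \<phi> i l m n (int k)) N k3 k1 k2) (UP_pair (\<lambda>k i. \<phi> i l m n (int k)) N k1 k2 k3)"
    if M3: "M \<in> {1, 2, 3}" and k: "k1 < k2" "k2 < k3" "k3 \<le> N" for l m n k1 k2 k3
  proof -
    obtain \<tau> :: "nat \<Rightarrow> nat" where \<tau>: "\<tau> ` {1, 2, 3} = {1..M}" "p (\<tau> 1) \<le> p (\<tau> 2)" "p (\<tau> 2) \<le> p (\<tau> 3)"
      using exists_sorted_enum3[OF M3] .
    show ?thesis
      unfolding \<phi>_def phi_eq_trop_col[OF \<tau>(1)] using UP_pair_trop_col_identity[OF \<tau>(2,3) k] .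
  qed
  show ?thesis
    using shifts two_rows identity unfolding UP_pair_def del1_def del2_def Let_def by simp
qed

end
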